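(* Let $\hat{\mathbb{N}}=\{n\in\mathbb{N}: n\ge 3\}$, let $n \in \hat{\mathbb{N}}$ and $M \subseteq \hat{\mathbb{N}} \setminus \{n\}$. Then $\mathrm{pPol}\, R^{\Lambda}_n \not\supseteq \bigcap_{m \in M} \mathrm{pPol}\, R^{\Lambda}_m$.
   Context: Partial functions are on $\{0,1\}$: an $n$-ary partial function is a map $f:\operatorname{dom} f\to\{0,1\}$ with $\operatorname{dom} f\subseteq\{0,1\}^n$; an empty intersection of sets of partial functions is understood as the set of all partial functions. For $\rho\subseteq\{0,1\}^h$, $\mathrm{pPol}\,\rho$ is the set of partial functions $f$ such that for every $h\times n$ matrix whose rows lie in $\operatorname{dom} f$ and whose columns lie in $\rho$, the column obtained by applying $f$ row-wise lies in $\rho$. For $m\ge3$, $R^{\Lambda}_m\subseteq\{0,1\}^{m+1}$ is the set of tuples $(x_1,\dots,x_{m+1})$ satisfying $x_1\lor\lnot x_2\lor\cdots\lor\lnot x_{m+1}$ and, for all pairwise distinct $i,j_1,j_2\in\{2,\dots,m+1\}$, $x_i\lor\lnot x_1\lor\lnot x_{j_1}\lor\lnot x_{j_2}$. *)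

theory Defs
  imports Main
begin

text \<open>Tuples in {0,1}^h are boolean lists of length h (False = 0, True = 1).\<close>

type_synonym pfun = "nat \<times> (bool list \<Rightarrow> bool option)"

definition is_pfun :: "pfun \<Rightarrow> bool" where
  "is_pfun p \<longleftrightarrow> fst p \<ge> 1 \<and> (\<forall>x. snd p x \<noteq> None \<longrightarrow> length x = fst p)"

definition all_pfuns :: "pfun set" where
  "all_pfuns = {p. is_pfun p}"

text \<open>pPol of an h-ary relation rho. A matrix with h rows and n columns is given
  by its rows X 0, ..., X (h-1); column j is [X 0 ! j, ..., X (h-1) ! j].\<close>

definition pPol :: "nat \<Rightarrow> bool list set \<Rightarrow> pfun set" where
  "pPol h rho = {p. is_pfun p \<and>
     (\<forall>X :: nat \<Rightarrow> bool list.
        (\<forall>i<h. snd p (X i) \<noteq> None) \<longrightarrow>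
        (\<forall>j<fst p. map (\<lambda>i. X i ! j) [0..<h] \<in> rho) \<longrightarrow>
        map (\<lambda>i. the (snd p (X i))) [0..<h] \<in> rho)}"

text \<open>R^Lambda_m as a set of lists of length m+1; x_k corresponds to x ! (k-1).\<close>

definition RLam :: "nat \<Rightarrow> bool list set" where
  "RLam m = {x. length x = m + 1 \<and>
     (x ! 0 \<or> (\<exists>k\<in>{1..m}. \<not> x ! k)) \<and>
     (\<forall>i\<in>{1..m}. \<forall>j1\<in>{1..m}. \<forall>j2\<in>{1..m}.
        i \<noteq> j1 \<and> i \<noteq> j2 \<and> j1 \<noteq> j2 \<longrightarrow>
        x ! i \<or> \<not> x ! 0 \<or> \<not> x ! j1 \<or> \<not> x ! j2)}"

definition Nhat :: "nat set" where
  "Nhat = {n. n \<ge> 3}"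

end

theory Submission imports Defs begin

text \<open>The separating function has arity 2n and is defined only on the row 1^n 0^n, with value 0,
  and on the n rows e_i followed by the complement of e_i, with value 1. Placing 1^n 0^n above
  all n rows of the second kind gives columns in R^Lambda_n, while the output (0,1,...,1) violates
  the first clause; so the function does not preserve R^Lambda_n.
  Now let m \<noteq> n and take m+1 rows from the domain whose columns lie in R^Lambda_m. If the output
  violated the first clause, the rows would be 1^n 0^n followed by rows of the second kind with
  indices g 1, ..., g m, and the columns force g to be a bijection onto {0..n-1}, so m = n. If it
  violated the second clause at i; j1, j2, the columns of the second half show that every index
  except that of row 0 is among the indices of rows j1 and j2. Without a further row this forces
  m = n = 3; a further row either pins the index of row j1 to that of row 0, or is a third row
  of the second kind whose index pairs with j1 and j2 must cover the same n-1 \<ge> 2 indices.\<close>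

definition lambda_clauses :: "nat \<Rightarrow> (nat \<Rightarrow> bool) \<Rightarrow> bool" where
  "lambda_clauses m x \<longleftrightarrow>
     (x 0 \<or> (\<exists>k\<in>{1..m}. \<not> x k)) \<and>
     (\<forall>i\<in>{1..m}. \<forall>j1\<in>{1..m}. \<forall>j2\<in>{1..m}.
        i \<noteq> j1 \<and> i \<noteq> j2 \<and> j1 \<noteq> j2 \<longrightarrow> x i \<or> \<not> x 0 \<or> \<not> x j1 \<or> \<not> x j2)"

lemma map_upt_in_RLam_iff: "map x [0..<m+1] \<in> RLam m \<longleftrightarrow> lambda_clauses m x"
  by (auto simp: RLam_def lambda_clauses_def nth_map_upt simp del: upt_Suc)

lemma lambda_clauses_cong:
  "(\<And>k. k \<le> m \<Longrightarrow> x k = y k) \<Longrightarrow> lambda_clauses m x = lambda_clauses m y"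
  unfolding lambda_clauses_def by (intro arg_cong2[where f = "(\<and>)"]) auto

lemma exists_other_below:
  fixes i n :: nat
  shows "2 \<le> n \<Longrightarrow> \<exists>l<n. l \<noteq> i"
  by (rule exI[of _ "if i = 0 then 1 else 0"]) auto

definition half_ones :: "nat \<Rightarrow> bool list" where
  "half_ones n = map (\<lambda>c. c < n) [0..<2*n]"

definition cross_vec :: "nat \<Rightarrow> nat \<Rightarrow> bool list" where
  "cross_vec n i = map (\<lambda>c. if c < n then c = i else c \<noteq> n + i) [0..<2*n]"

lemma half_ones_nth [simp]: "c < 2*n \<Longrightarrow> half_ones n ! c = (c < n)"
  by (simp add: half_ones_def)

lemma cross_vec_nth [simp]: "c < 2*n \<Longrightarrow> cross_vec n i ! c = (if c < n then c = i else c \<noteq> n + i)"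
  by (simp add: cross_vec_def)

lemma half_ones_neq_cross_vec:
  assumes "2 \<le> n" "i < n"
  shows "half_ones n \<noteq> cross_vec n i"
proof
  assume eq: "half_ones n = cross_vec n i"
  obtain l where "l < n" "l \<noteq> i" using exists_other_below assms(1) by blast
  hence "half_ones n ! (n + l) \<noteq> cross_vec n i ! (n + l)" by simp
  thus False using eq by simp
qed

definition witness_pfun :: "nat \<Rightarrow> pfun" where
  "witness_pfun n = (2*n, \<lambda>x. if x = half_ones n then Some False
     else if x \<in> cross_vec n ` {..<n} then Some True else None)"

lemma is_pfun_witness_pfun: "1 \<le> n \<Longrightarrow> is_pfun (witness_pfun n)"
  by (auto simp: is_pfun_def witness_pfun_def half_ones_def cross_vec_def)

lemma witness_pfun_half_ones: "snd (witness_pfun n) (half_ones n) = Some False"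
  by (simp add: witness_pfun_def)

lemma witness_pfun_cross_vec:
  "2 \<le> n \<Longrightarrow> i < n \<Longrightarrow> snd (witness_pfun n) (cross_vec n i) = Some True"
  using half_ones_neq_cross_vec[of n i] by (auto simp: witness_pfun_def)

lemma witness_pfun_not_preserves:
  assumes "2 \<le> n"
  shows "witness_pfun n \<notin> pPol (n+1) (RLam n)"
proof
  assume preserves: "witness_pfun n \<in> pPol (n+1) (RLam n)"
  define X where "X k = (if k = 0 then half_ones n else cross_vec n (k - 1))" for k
  have outputs: "snd (witness_pfun n) (X k) = Some (k \<noteq> 0)" if "k < n+1" for k
    using that assms by (simp add: X_def witness_pfun_half_ones witness_pfun_cross_vec)
  have cols: "lambda_clauses n (\<lambda>k. X k ! c)" if "c < 2*n" for c
  proof (cases "c < n")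
    case True
    thus ?thesis using that by (auto simp: lambda_clauses_def X_def)
  next
    case False
    hence "c - n + 1 \<in> {1..n}" "\<not> X (c - n + 1) ! c" "\<not> X 0 ! c"
      using that by (simp_all add: X_def)
    thus ?thesis unfolding lambda_clauses_def by blast
  qed
  have "map (\<lambda>k. the (snd (witness_pfun n) (X k))) [0..<n+1] \<in> RLam n"
    using preserves outputs cols
    unfolding pPol_def map_upt_in_RLam_iff by (simp add: witness_pfun_def)
  hence "lambda_clauses n (\<lambda>k. the (snd (witness_pfun n) (X k)))"
    by (simp only: map_upt_in_RLam_iff)
  thus False using outputs by (simp add: lambda_clauses_def)
qed

lemma cross_index_bij:
  assumes "2 \<le> n" and top: "X 0 = half_ones n"
    and rows: "\<And>k. k \<in> {1..m} \<Longrightarrow> g k < n \<and> X k = cross_vec n (g k)"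
    and cols: "\<And>c. c < 2*n \<Longrightarrow> lambda_clauses m (\<lambda>k. X k ! c)"
  shows "bij_betw g {1..m} {..<n}"
proof -
  have onto: "\<exists>k\<in>{1..m}. g k = l" if "l < n" for l
    using cols[of "n + l"] that rows top by (auto simp: lambda_clauses_def)
  have "inj_on g {1..m}"
  proof (rule inj_onI, rule ccontr)
    fix a b assume ab: "a \<in> {1..m}" "b \<in> {1..m}" "g a = g b" "a \<noteq> b"
    obtain l where "l < n" "l \<noteq> g a" using exists_other_below \<open>2 \<le> n\<close> by blast
    then obtain k where k: "k \<in> {1..m}" "g k = l" using onto by blast
    have "k \<noteq> a" "k \<noteq> b" using k ab \<open>l \<noteq> g a\<close> by auto
    hence "X k ! g a \<or> \<not> X 0 ! g a \<or> \<not> X a ! g a \<or> \<not> X b ! g a"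
      using cols[of "g a"] ab(1,2,4) k(1) rows[OF ab(1)] unfolding lambda_clauses_def by auto
    thus False using rows[OF ab(1)] rows[OF ab(2)] rows[OF k(1)] ab(3) k(2) \<open>l \<noteq> g a\<close> top
      by auto
  qed
  moreover have "g ` {1..m} = {..<n}" using rows onto by fastforce
  ultimately show ?thesis by (simp add: bij_betw_def)
qed

lemma output_first_clause:
  assumes "2 \<le> n" "m \<noteq> n"
    and rows: "\<And>k. k \<le> m \<Longrightarrow> X k \<noteq> half_ones n \<Longrightarrow> g k < n \<and> X k = cross_vec n (g k)"
    and cols: "\<And>c. c < 2*n \<Longrightarrow> lambda_clauses m (\<lambda>k. X k ! c)"
  shows "X 0 \<noteq> half_ones n \<or> (\<exists>k\<in>{1..m}. X k = half_ones n)"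
proof (rule ccontr)
  assume "\<not> ?thesis"
  hence "bij_betw g {1..m} {..<n}"
    using assms by (intro cross_index_bij[where X = X]) auto
  hence "m = n" using bij_betw_same_card by fastforce
  with \<open>m \<noteq> n\<close> show False ..
qed

lemma cross_index_cover:
  assumes top: "X 0 = cross_vec n j" and "X i = half_ones n"
    and "X x = cross_vec n p" "X y = cross_vec n q"
    and "i \<in> {1..m}" "x \<in> {1..m}" "y \<in> {1..m}" "i \<noteq> x" "i \<noteq> y" "x \<noteq> y"
    and cols: "\<And>c. c < 2*n \<Longrightarrow> lambda_clauses m (\<lambda>k. X k ! c)"
  shows "{..<n} - {j} \<subseteq> {p, q}"
proof
  fix l assume l: "l \<in> {..<n} - {j}"
  hence "X i ! (n + l) \<or> \<not> X 0 ! (n + l) \<or> \<not> X x ! (n + l) \<or> \<not> X y ! (n + l)"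
    using cols[of "n + l"] assms(5-10) unfolding lambda_clauses_def by auto
  thus "l \<in> {p, q}" using assms(1-4) l by auto
qed

lemma cross_index_eq_top:
  assumes "X 0 = cross_vec n j" "j < n" "X i = half_ones n" "X k = half_ones n"
    and "X a = cross_vec n p"
    and "i \<in> {1..m}" "k \<in> {1..m}" "a \<in> {1..m}" "a \<noteq> i" "a \<noteq> k" "i \<noteq> k"
    and cols: "\<And>c. c < 2*n \<Longrightarrow> lambda_clauses m (\<lambda>k. X k ! c)"
  shows "p = j"
proof -
  have "X a ! j \<or> \<not> X 0 ! j \<or> \<not> X i ! j \<or> \<not> X k ! j"
    using cols[of j] assms(2,6-11) unfolding lambda_clauses_def by auto
  thus ?thesis using assms(1-5) by auto
qed

lemma output_second_clause:
  assumes "3 \<le> n" "m \<noteq> n"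
    and rows: "\<And>k. k \<le> m \<Longrightarrow> X k \<noteq> half_ones n \<Longrightarrow> g k < n \<and> X k = cross_vec n (g k)"
    and cols: "\<And>c. c < 2*n \<Longrightarrow> lambda_clauses m (\<lambda>k. X k ! c)"
    and iab: "i \<in> {1..m}" "a \<in> {1..m}" "b \<in> {1..m}" "i \<noteq> a" "i \<noteq> b" "a \<noteq> b"
  shows "X i \<noteq> half_ones n \<or> X 0 = half_ones n \<or> X a = half_ones n \<or> X b = half_ones n"
proof (rule ccontr)
  assume "\<not> ?thesis"
  hence violation: "X i = half_ones n" "X 0 \<noteq> half_ones n" "X a \<noteq> half_ones n" "X b \<noteq> half_ones n"
    by simp_all
  have cross: "X k = cross_vec n (g k)" if "k \<le> m" "X k \<noteq> half_ones n" for k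
    using rows that by blast
  define A where "A = {..<n} - {g 0}"
  have cover: "A \<subseteq> {g x, g y}"
    if "x \<in> {1..m}" "y \<in> {1..m}" "x \<noteq> i" "y \<noteq> i" "x \<noteq> y"
       "X x \<noteq> half_ones n" "X y \<noteq> half_ones n" for x y
    unfolding A_def
    using cross_index_cover[OF cross[of 0] \<open>X i = half_ones n\<close> cross[of x] cross[of y]] that iab cols
      \<open>X 0 \<noteq> half_ones n\<close> by auto
  have "g 0 < n" using rows violation(2) by blast
  hence card_A: "card A = n - 1" by (simp add: A_def)
  hence "\<not> card A \<le> Suc 0" using \<open>3 \<le> n\<close> by simp
  then obtain s t where st: "s \<in> A" "t \<in> A" "s \<noteq> t"
    by (auto simp: card_le_Suc0_iff_eq A_def)
  show False
  proof (cases "{1..m} \<subseteq> {i, a, b}")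
    case True
    have "card {i, a, b} = 3" using iab by simp
    hence "m \<le> 3" "3 \<le> m"
      using card_mono[OF _ True] card_mono[of "{1..m}" "{i, a, b}"] iab by auto
    moreover have "card {g a, g b} \<le> 2" by (cases "g a = g b") auto
    hence "n - 1 \<le> 2"
      using card_A card_mono[OF _ cover[of a b]] iab violation by simp
    ultimately show False using \<open>3 \<le> n\<close> \<open>m \<noteq> n\<close> by linarith
  next
    case False
    then obtain k where k: "k \<in> {1..m}" "k \<noteq> i" "k \<noteq> a" "k \<noteq> b" by blast
    show False
    proof (cases "X k = half_ones n")
      case True
      have "X 0 = cross_vec n (g 0)" "X a = cross_vec n (g a)" using cross iab violation by auto
      hence "g a = g 0"
        using cross_index_eq_top[OF _ \<open>g 0 < n\<close> \<open>X i = half_ones n\<close> True _ iab(1) k(1) iab(2)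
            iab(4)[symmetric] k(3)[symmetric] k(2)[symmetric] cols] by blast
      thus False using cover[of a b] st iab violation unfolding A_def by auto
    next
      case False
      have "s \<in> {g a, g b} \<inter> {g a, g k} \<inter> {g b, g k}" "t \<in> {g a, g b} \<inter> {g a, g k} \<inter> {g b, g k}"
        using cover[of a b] cover[of a k] cover[of b k] st iab k False violation by auto
      thus False using \<open>s \<noteq> t\<close> by auto
    qed
  qed
qed

lemma output_row_in_lambda_clauses:
  assumes "3 \<le> n" "m \<noteq> n"
    and rows: "\<And>k. k \<le> m \<Longrightarrow> X k \<noteq> half_ones n \<Longrightarrow> g k < n \<and> X k = cross_vec n (g k)"
    and cols: "\<And>c. c < 2*n \<Longrightarrow> lambda_clauses m (\<lambda>k. X k ! c)"
  shows "lambda_clauses m (\<lambda>k. X k \<noteq> half_ones n)"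
proof -
  have "2 \<le> n" using \<open>3 \<le> n\<close> by simp
  show ?thesis
    unfolding lambda_clauses_def
    using output_first_clause[OF \<open>2 \<le> n\<close> \<open>m \<noteq> n\<close> rows cols] output_second_clause[OF assms]
    by blast
qed

lemma witness_pfun_preserves:
  assumes "3 \<le> n" "m \<noteq> n"
  shows "witness_pfun n \<in> pPol (m+1) (RLam m)"
  unfolding pPol_def map_upt_in_RLam_iff
proof (intro CollectI conjI allI impI)
  show "is_pfun (witness_pfun n)" using assms by (simp add: is_pfun_witness_pfun)
  fix X :: "nat \<Rightarrow> bool list"
  assume dom: "\<forall>i<m+1. snd (witness_pfun n) (X i) \<noteq> None"
    and cols: "\<forall>j<fst (witness_pfun n). lambda_clauses m (\<lambda>i. X i ! j)"
  have "\<forall>k. \<exists>i. k \<le> m \<longrightarrow> X k \<noteq> half_ones n \<longrightarrow> i < n \<and> X k = cross_vec n i"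
    using dom by (auto simp: witness_pfun_def split: if_splits)
  then obtain g where rows: "\<And>k. k \<le> m \<Longrightarrow> X k \<noteq> half_ones n \<Longrightarrow> g k < n \<and> X k = cross_vec n (g k)"
    by metis
  have "the (snd (witness_pfun n) (X k)) = (X k \<noteq> half_ones n)" if "k \<le> m" for k
    using rows[OF that] assms
    by (cases "X k = half_ones n") (auto simp: witness_pfun_half_ones witness_pfun_cross_vec)
  moreover have "lambda_clauses m (\<lambda>k. X k \<noteq> half_ones n)"
    using cols assms by (intro output_row_in_lambda_clauses[OF _ _ rows]) (auto simp: witness_pfun_def)
  ultimately show "lambda_clauses m (\<lambda>k. the (snd (witness_pfun n) (X k)))"
    by (subst lambda_clauses_cong) auto
qed

theorem mainTheorem19:
  fixes n :: nat and M :: "nat set"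
  assumes "n \<in> Nhat" and "M \<subseteq> Nhat - {n}"
  shows "\<not> (all_pfuns \<inter> (\<Inter>m\<in>M. pPol (m + 1) (RLam m)) \<subseteq> pPol (n + 1) (RLam n))"
proof
  have "3 \<le> n" using assms(1) by (simp add: Nhat_def)
  have "witness_pfun n \<in> all_pfuns"
    using \<open>3 \<le> n\<close> by (simp add: all_pfuns_def is_pfun_witness_pfun)
  moreover have "witness_pfun n \<in> pPol (m + 1) (RLam m)" if "m \<in> M" for m
    using that assms(2) \<open>3 \<le> n\<close> by (intro witness_pfun_preserves) auto
  moreover assume "all_pfuns \<inter> (\<Inter>m\<in>M. pPol (m + 1) (RLam m)) \<subseteq> pPol (n + 1) (RLam n)"
  ultimately have "witness_pfun n \<in> pPol (n + 1) (RLam n)" by blast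
  thus False using witness_pfun_not_preserves \<open>3 \<le> n\<close> by simp
qed

end
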